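(* Let $E$ be a finite graded atomic commutative monoid of idempotents with set of atoms $A$. Then $E$ has a monoid presentation with generators $a\in A$ and relations: $ab=ba$ for $a,b\in A$; and $a_1\cdots a_k=a_1\cdots a_kb$ for all $a_1,\ldots,a_k,b\in A$ with $1\le k\le\mathrm{rk}\,E$, $\{a_1,\dots,a_k\}$ independent and $b\le a_1\vee\cdots\vee a_k$.
   Context: A finite commutative monoid of idempotents $E$ is a join-semilattice with least element $\mathbf 0$ (the identity) and greatest element $\mathbf 1$ via $x\le y\iff xy=y$, with $xy=x\vee y$. It is graded if all saturated chains $\mathbf 0=x_0<\cdots<x_k=x$ have the same length $\mathrm{rk}(x)=k$, and $\mathrm{rk}\,E=\mathrm{rk}(\mathbf 1)$; atoms are the elements of rank $1$; $E$ is atomic if every element is a join of atoms. A set $S$ of atoms is independent if $\bigvee(S\setminus\{s\})<\bigvee S$ for every $s\in S$. *)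

theory Defs
  imports Main
begin

text \<open>A finite commutative monoid of idempotents is modelled as a finite type of class
  comm_monoid_mult with all elements idempotent. The monoid identity (written 1 in
  Isabelle) is the least element \<open>0\<close> of the paper.\<close>

definition le_E :: "'a::comm_monoid_mult \<Rightarrow> 'a \<Rightarrow> bool" where
  "le_E x y \<longleftrightarrow> x * y = y"

definition lt_E :: "'a::comm_monoid_mult \<Rightarrow> 'a \<Rightarrow> bool" where
  "lt_E x y \<longleftrightarrow> le_E x y \<and> x \<noteq> y"

definition covers_E :: "'a::comm_monoid_mult \<Rightarrow> 'a \<Rightarrow> bool" where
  "covers_E x y \<longleftrightarrow> lt_E x y \<and> \<not> (\<exists>z. lt_E x z \<and> lt_E z y)"

text \<open>A saturated chain \<open>0 = x_0 < ... < x_k = x\<close>, given as the list \<open>[x_0,...,x_k]\<close>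
  (of length k+1).\<close>
definition sat_chain :: "'a::comm_monoid_mult list \<Rightarrow> 'a \<Rightarrow> bool" where
  "sat_chain xs x \<longleftrightarrow> xs \<noteq> [] \<and> hd xs = 1 \<and> last xs = x \<and>
     (\<forall>i. Suc i < length xs \<longrightarrow> covers_E (xs ! i) (xs ! Suc i))"

definition graded_E :: "'a::{comm_monoid_mult,finite} itself \<Rightarrow> bool" where
  "graded_E _ \<longleftrightarrow> (\<forall>(x::'a) xs ys. sat_chain xs x \<and> sat_chain ys x \<longrightarrow> length xs = length ys)"

definition rk_E :: "'a::comm_monoid_mult \<Rightarrow> nat" where
  "rk_E x = (THE k. \<exists>xs. sat_chain xs x \<and> length xs = Suc k)"

text \<open>Greatest element \<open>1\<close> of the paper: the join (product) of all elements.\<close>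
definition top_E :: "'a::{comm_monoid_mult,finite}" where
  "top_E = (\<Prod>x\<in>UNIV. x)"

definition atoms_E :: "'a::comm_monoid_mult set" where
  "atoms_E = {a. rk_E a = 1}"

text \<open>Join of a finite set is its product.\<close>
definition atomic_E :: "'a::{comm_monoid_mult,finite} itself \<Rightarrow> bool" where
  "atomic_E _ \<longleftrightarrow> (\<forall>x::'a. \<exists>S. S \<subseteq> atoms_E \<and> x = (\<Prod>s\<in>S. s))"

definition independent_E :: "'a::comm_monoid_mult set \<Rightarrow> bool" where
  "independent_E S \<longleftrightarrow> (\<forall>s\<in>S. lt_E (\<Prod>t\<in>S - {s}. t) (\<Prod>t\<in>S. t))"

inductive cong_gen :: "'b set \<Rightarrow> ('b list \<Rightarrow> 'b list \<Rightarrow> bool) \<Rightarrow> 'b list \<Rightarrow> 'b list \<Rightarrow> bool"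
  for A R where
  base: "R u v \<Longrightarrow> set u \<subseteq> A \<Longrightarrow> set v \<subseteq> A \<Longrightarrow> cong_gen A R u v"
| refl: "set u \<subseteq> A \<Longrightarrow> cong_gen A R u u"
| sym: "cong_gen A R u v \<Longrightarrow> cong_gen A R v u"
| trans: "cong_gen A R u v \<Longrightarrow> cong_gen A R v w \<Longrightarrow> cong_gen A R u w"
| ctx: "cong_gen A R u v \<Longrightarrow> set p \<subseteq> A \<Longrightarrow> set q \<subseteq> A \<Longrightarrow> cong_gen A R (p @ u @ q) (p @ v @ q)"

text \<open>M is presented (as a monoid) by generators A \<subseteq> M (mapped to themselves) and
  relations R: the evaluation map from the free monoid on A (words) onto M is
  surjective and its kernel is the congruence generated by R.\<close>
definition presents :: "'a set \<Rightarrow> ('a list \<Rightarrow> 'a list \<Rightarrow> bool) \<Rightarrow> 'a::monoid_mult set \<Rightarrow> bool" where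
  "presents A R M \<longleftrightarrow>
     (\<forall>x\<in>M. \<exists>w. set w \<subseteq> A \<and> prod_list w = x) \<and>
     (\<forall>u v. set u \<subseteq> A \<longrightarrow> set v \<subseteq> A \<longrightarrow> (prod_list u = prod_list v \<longleftrightarrow> cong_gen A R u v))"

definition rels_E :: "'a::{comm_monoid_mult,finite} list \<Rightarrow> 'a list \<Rightarrow> bool" where
  "rels_E u v \<longleftrightarrow>
     (\<exists>a\<in>atoms_E. \<exists>b\<in>atoms_E. u = [a, b] \<and> v = [b, a]) \<or>
     (\<exists>as b. 1 \<le> length as \<and> length as \<le> rk_E (top_E::'a) \<and> set as \<subseteq> atoms_E \<and>
        b \<in> atoms_E \<and> independent_E (set as) \<and> le_E b (prod_list as) \<and>
        u = as \<and> v = as @ [b])"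

end

theory Submission
  imports Defs "HOL-Library.Multiset"
begin

text \<open>The relations hold in \<open>E\<close>, so only completeness needs an argument. Since the atoms
  commute, a word is determined up to the congruence by its multiset of letters. Given a word
  \<open>u\<close>, a subset \<open>I\<close> of its letters that is minimal with the same join is independent; an
  independent set \<open>{a\<^sub>1,\<dots>,a\<^sub>k}\<close> yields the strict chain \<open>0 < a\<^sub>1 < a\<^sub>1\<or>a\<^sub>2 < \<dots>\<close>, so
  \<open>k \<le> rk E\<close> by gradedness. The absorption relations for \<open>I\<close> then show that \<open>u\<close> is congruent to
  \<open>u w\<close> for every word \<open>w\<close> with join below that of \<open>u\<close>. If \<open>u\<close> and \<open>v\<close> have the same value,
  this gives \<open>u \<sim> u v \<sim> v u \<sim> v\<close>.\<close>

lemma cong_gen_move: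
  assumes swap: "\<And>a b. a \<in> A \<Longrightarrow> b \<in> A \<Longrightarrow> R [a, b] [b, a]"
  shows "a \<in> A \<Longrightarrow> set p \<subseteq> A \<Longrightarrow> set q \<subseteq> A \<Longrightarrow> cong_gen A R (a # p @ q) (p @ a # q)"
proof (induction p)
  case Nil
  then show ?case by (simp add: cong_gen.refl)
next
  case (Cons b p)
  have "cong_gen A R [a, b] [b, a]"
    using Cons.prems by (simp add: swap cong_gen.base)
  from cong_gen.ctx[OF this, of "[]" "p @ q"] Cons.prems
  have swap_ab: "cong_gen A R (a # b # p @ q) (b # a # p @ q)" by simp
  have "cong_gen A R (a # p @ q) (p @ a # q)"
    using Cons by simp
  from cong_gen.ctx[OF this, of "[b]" "[]"] Cons.prems
  have "cong_gen A R (b # a # p @ q) (b # p @ a # q)" by simp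
  with swap_ab show ?case by (auto intro: cong_gen.trans)
qed

lemma cong_gen_mset:
  assumes swap: "\<And>a b. a \<in> A \<Longrightarrow> b \<in> A \<Longrightarrow> R [a, b] [b, a]"
  shows "set u \<subseteq> A \<Longrightarrow> mset u = mset v \<Longrightarrow> cong_gen A R u v"
proof (induction u arbitrary: v)
  case Nil
  then show ?case by (simp add: cong_gen.refl)
next
  case (Cons a u)
  obtain p q where v: "v = p @ a # q"
    using Cons.prems(2) by (metis list.set_intros(1) set_mset_mset split_list)
  have "cong_gen A R u (p @ q)"
    using Cons v by simp
  from cong_gen.ctx[OF this, of "[a]" "[]"] Cons.prems
  have front: "cong_gen A R (a # u) (a # p @ q)" by simp
  have "set (p @ q) \<subseteq> A"
    using Cons.prems mset_eq_setD[OF Cons.prems(2)] v by auto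
  then have "cong_gen A R (a # p @ q) (p @ a # q)"
    using cong_gen_move[where A = A and R = R, OF swap] Cons.prems by simp
  with front show ?case
    using v by (blast intro: cong_gen.trans)
qed

lemma cong_gen_absorb:
  assumes "set u \<subseteq> A" and "\<And>c. c \<in> set w \<Longrightarrow> R u (u @ [c])"
  shows "set w \<subseteq> A \<Longrightarrow> cong_gen A R u (u @ w)"
  using assms(2)
proof (induction w)
  case Nil
  then show ?case using assms(1) by (simp add: cong_gen.refl)
next
  case (Cons c w)
  have "cong_gen A R u (u @ [c])"
    using Cons.prems assms(1) by (simp add: cong_gen.base)
  from cong_gen.ctx[OF this, of "[]" w] Cons.prems
  have "cong_gen A R (u @ w) (u @ c # w)" by simp
  with Cons show ?case by (auto intro: cong_gen.trans)
qed

locale idem_comm_monoid =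
  fixes type :: "'a::{comm_monoid_mult,finite} itself"
  assumes idem: "\<And>x::'a. x * x = x"
begin

lemma le_E_refl: "le_E (x::'a) x"
  by (simp add: le_E_def idem)

lemma le_E_trans: "le_E (x::'a) y \<Longrightarrow> le_E y z \<Longrightarrow> le_E x z"
  unfolding le_E_def by (metis mult.assoc)

lemma le_E_antisym: "le_E (x::'a) y \<Longrightarrow> le_E y x \<Longrightarrow> x = y"
  unfolding le_E_def by (metis mult.commute)

lemma le_E_mult_left: "le_E (x::'a) (x * y)"
  unfolding le_E_def by (metis mult.assoc idem)

lemma le_E_mult_right: "le_E (y::'a) (x * y)"
  using le_E_mult_left[of y x] by (simp add: mult.commute)

lemma le_E_absorb: "le_E (b::'a) x \<Longrightarrow> x * b = x"
  unfolding le_E_def by (simp add: mult.commute)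

lemma one_le_E: "le_E 1 (x::'a)"
  by (simp add: le_E_def)

lemma le_E_one_iff: "le_E (x::'a) 1 \<longleftrightarrow> x = 1"
  by (simp add: le_E_def)

lemma lt_le_E_trans: "lt_E (x::'a) y \<Longrightarrow> le_E y z \<Longrightarrow> lt_E x z"
  unfolding lt_E_def using le_E_trans le_E_antisym by blast

lemma le_lt_E_trans: "le_E (x::'a) y \<Longrightarrow> lt_E y z \<Longrightarrow> lt_E x z"
  unfolding lt_E_def using le_E_trans le_E_antisym by blast

lemma prod_list_eq_prod_set: "prod_list (w::'a list) = (\<Prod>x\<in>set w. x)"
proof (induction w)
  case Nil
  then show ?case by simp
next
  case (Cons a w)
  show ?case
  proof (cases "a \<in> set w")
    case True
    have "(\<Prod>x\<in>set w. x) = a * (\<Prod>x\<in>set w - {a}. x)"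
      using True by (simp add: prod.remove)
    then have "a * (\<Prod>x\<in>set w. x) = (\<Prod>x\<in>set w. x)"
      by (metis mult.assoc idem)
    then show ?thesis
      using Cons True by (simp add: insert_absorb)
  next
    case False
    then show ?thesis using Cons by simp
  qed
qed

lemma le_E_prod_mono: "(S::'a set) \<subseteq> T \<Longrightarrow> le_E (\<Prod>x\<in>S. x) (\<Prod>x\<in>T. x)"
  by (metis finite le_E_mult_right prod.subset_diff)

lemma le_E_prod_member: "(a::'a) \<in> S \<Longrightarrow> le_E a (\<Prod>x\<in>S. x)"
  using le_E_prod_mono[of "{a}" S] by simp

lemma le_E_prod_list_member: "(a::'a) \<in> set w \<Longrightarrow> le_E a (prod_list w)"
  by (simp add: prod_list_eq_prod_set le_E_prod_member)

lemma le_E_top: "le_E (x::'a) top_E"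
  unfolding top_E_def by (rule le_E_prod_member) simp

lemma prod_Diff_singleton_eq_iff:
  assumes "(s::'a) \<in> S"
  shows "(\<Prod>t\<in>S - {s}. t) = (\<Prod>t\<in>S. t) \<longleftrightarrow> le_E s (\<Prod>t\<in>S - {s}. t)"
proof -
  have "(\<Prod>t\<in>S. t) = (\<Prod>t\<in>S - {s}. t) * s"
    using assms by (simp add: prod.remove mult.commute)
  then show ?thesis
    by (metis le_E_absorb le_E_prod_member assms le_E_def)
qed

lemma independent_E_iff: "independent_E S \<longleftrightarrow> (\<forall>s\<in>S. \<not> le_E (s::'a) (\<Prod>t\<in>S - {s}. t))"
proof -
  have "lt_E (\<Prod>t\<in>S - {s}. t) (\<Prod>t\<in>S. t) \<longleftrightarrow> \<not> le_E s (\<Prod>t\<in>S - {s}. t)" if "s \<in> S" for s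
    using prod_Diff_singleton_eq_iff[OF that] le_E_prod_mono[of "S - {s}" S]
    unfolding lt_E_def by blast
  then show ?thesis
    unfolding independent_E_def by blast
qed

lemma independent_E_subset:
  assumes "independent_E (S::'a set)" and "T \<subseteq> S"
  shows "independent_E T"
  unfolding independent_E_iff
proof (intro ballI notI)
  fix t assume t: "t \<in> T" "le_E t (\<Prod>x\<in>T - {t}. x)"
  have "le_E (\<Prod>x\<in>T - {t}. x) (\<Prod>x\<in>S - {t}. x)"
    using assms(2) by (intro le_E_prod_mono) blast
  then show False
    using assms t le_E_trans unfolding independent_E_iff by blast
qed

lemma exists_independent_subset_prod_eq:
  "\<exists>T \<subseteq> (S::'a set). independent_E T \<and> (\<Prod>t\<in>T. t) = (\<Prod>s\<in>S. s)"
proof -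
  let ?P = "\<lambda>T. T \<subseteq> S \<and> (\<Prod>t\<in>T. t) = (\<Prod>s\<in>S. s)"
  obtain T where T: "?P T" and min: "\<And>T'. ?P T' \<Longrightarrow> card T \<le> card T'"
    using ex_has_least_nat[of ?P S card] by blast
  have "\<not> le_E t (\<Prod>x\<in>T - {t}. x)" if "t \<in> T" for t
  proof
    assume "le_E t (\<Prod>x\<in>T - {t}. x)"
    then have "?P (T - {t})"
      using T prod_Diff_singleton_eq_iff[OF that] by auto
    then have "card T \<le> card (T - {t})" by (rule min)
    moreover have "card (T - {t}) < card T"
      using that by (rule card_Diff1_less[OF finite])
    ultimately show False by simp
  qed
  then have "independent_E T"
    unfolding independent_E_iff by blast
  with T show ?thesis by blast
qed

lemma exists_cover: "lt_E (x::'a) y \<Longrightarrow> \<exists>z. covers_E x z \<and> le_E z y"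
proof (induction "card {w. lt_E x w \<and> lt_E w y}" arbitrary: y rule: less_induct)
  case less
  show ?case
  proof (cases "covers_E x y")
    case True
    then show ?thesis using le_E_refl by blast
  next
    case False
    then obtain w where w: "lt_E x w" "lt_E w y"
      using less.prems unfolding covers_E_def by blast
    have "{v. lt_E x v \<and> lt_E v w} \<subset> {v. lt_E x v \<and> lt_E v y}"
      using w lt_le_E_trans unfolding lt_E_def by blast
    then have "card {v. lt_E x v \<and> lt_E v w} < card {v. lt_E x v \<and> lt_E v y}"
      by (simp add: psubset_card_mono)
    from less.hyps[OF this w(1)] obtain z where "covers_E x z" "le_E z w" by blast
    then show ?thesis
      using w(2) le_E_trans unfolding lt_E_def by blast
  qed
qed

lemma sat_chain_one: "sat_chain [1::'a] 1"
  unfolding sat_chain_def by simp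

lemma sat_chain_snoc: "sat_chain xs (x::'a) \<Longrightarrow> covers_E x z \<Longrightarrow> sat_chain (xs @ [z]) z"
  unfolding sat_chain_def
  by (auto simp: nth_append last_conv_nth less_Suc_eq) (metis One_nat_def diff_Suc_1)

lemma sat_chain_extend:
  "sat_chain xs (x::'a) \<Longrightarrow> le_E x y \<Longrightarrow> \<exists>ys. sat_chain ys y \<and> length xs \<le> length ys"
proof (induction "card {w. lt_E x w \<and> le_E w y}" arbitrary: x xs rule: less_induct)
  case less
  show ?case
  proof (cases "x = y")
    case True
    then show ?thesis using less.prems by blast
  next
    case False
    then obtain z where z: "covers_E x z" "le_E z y"
      using less.prems exists_cover unfolding lt_E_def by blast
    then have xz: "lt_E x z" unfolding covers_E_def by simp
    have "{v. lt_E z v \<and> le_E v y} \<subset> {v. lt_E x v \<and> le_E v y}"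
      using xz z le_lt_E_trans unfolding lt_E_def by blast
    then have "card {v. lt_E z v \<and> le_E v y} < card {v. lt_E x v \<and> le_E v y}"
      by (simp add: psubset_card_mono)
    from less.hyps[OF this sat_chain_snoc[OF less.prems(1) z(1)] z(2)]
    show ?thesis by fastforce
  qed
qed

lemma exists_sat_chain: "\<exists>xs. sat_chain xs (x::'a)"
  using sat_chain_extend[OF sat_chain_one one_le_E] by blast

end

locale graded_idem_comm_monoid = idem_comm_monoid type
  for type :: "'a::{comm_monoid_mult,finite} itself" +
  assumes graded: "graded_E type"
begin

lemma rk_E_sat_chain: "sat_chain xs (x::'a) \<Longrightarrow> rk_E x = length xs - 1"
  unfolding rk_E_def
proof (rule the_equality)
  assume "sat_chain xs x"
  then show "\<exists>ys. sat_chain ys x \<and> length ys = Suc (length xs - 1)"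
    unfolding sat_chain_def by auto
next
  fix k assume xs: "sat_chain xs x" and "\<exists>ys. sat_chain ys x \<and> length ys = Suc k"
  then obtain ys where ys: "sat_chain ys x" "length ys = Suc k"
    by blast
  have "length ys = length xs"
    using graded xs ys(1) unfolding graded_E_def by blast
  with ys(2) show "k = length xs - 1"
    by simp
qed

lemma rk_E_one: "rk_E (1::'a) = 0"
  using rk_E_sat_chain[OF sat_chain_one] by simp

lemma rk_E_less: "lt_E (x::'a) y \<Longrightarrow> rk_E x < rk_E y"
proof -
  assume "lt_E x y"
  then obtain z where z: "covers_E x z" "le_E z y"
    using exists_cover by blast
  obtain xs where xs: "sat_chain xs x"
    using exists_sat_chain by blast
  then obtain ys where ys: "sat_chain ys y" "length (xs @ [z]) \<le> length ys"
    using sat_chain_extend[OF sat_chain_snoc[OF xs z(1)] z(2)] by blast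
  have "0 < length xs"
    using xs unfolding sat_chain_def by simp
  moreover have "Suc (length xs) \<le> length ys"
    using ys(2) by simp
  ultimately show ?thesis
    unfolding rk_E_sat_chain[OF xs] rk_E_sat_chain[OF ys(1)] by linarith
qed

lemma rk_E_le_top: "rk_E (x::'a) \<le> rk_E (top_E::'a)"
  using rk_E_less[of x top_E] le_E_top unfolding lt_E_def by fastforce

lemma atom_ne_one: "(a::'a) \<in> atoms_E \<Longrightarrow> a \<noteq> 1"
  unfolding atoms_E_def using rk_E_one by (metis mem_Collect_eq zero_neq_one)

lemma prod_list_atoms_eq_one_iff:
  assumes "set (w::'a list) \<subseteq> atoms_E"
  shows "prod_list w = 1 \<longleftrightarrow> w = []"
proof
  assume w: "prod_list w = 1"
  show "w = []"
  proof (rule ccontr)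
    assume "w \<noteq> []"
    then obtain a where a: "a \<in> set w"
      by (cases w) auto
    then have "a = 1"
      using le_E_prod_list_member[OF a] w le_E_one_iff by simp
    with a assms atom_ne_one show False
      by blast
  qed
qed simp

lemma card_le_rk_E_prod: "independent_E (S::'a set) \<Longrightarrow> card S \<le> rk_E (\<Prod>s\<in>S. s)"
  using finite[of S]
proof (induction S rule: finite_induct)
  case empty
  then show ?case by simp
next
  case (insert s S)
  have prod_insert: "(\<Prod>t\<in>insert s S. t) = s * (\<Prod>t\<in>S. t)"
    using insert.hyps by simp
  have "\<not> le_E s (\<Prod>t\<in>S. t)"
    using insert.prems insert.hyps(2) unfolding independent_E_iff by auto
  then have "lt_E (\<Prod>t\<in>S. t) (\<Prod>t\<in>insert s S. t)"
    unfolding prod_insert lt_E_def using le_E_mult_right le_E_mult_left by metis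
  then have "rk_E (\<Prod>t\<in>S. t) < rk_E (\<Prod>t\<in>insert s S. t)"
    by (rule rk_E_less)
  moreover have "card S \<le> rk_E (\<Prod>t\<in>S. t)"
    using insert independent_E_subset[of "insert s S" S] by blast
  ultimately show ?case
    using insert.hyps by simp
qed

lemma card_independent_E_le_rk_top: "independent_E (S::'a set) \<Longrightarrow> card S \<le> rk_E (top_E::'a)"
  using card_le_rk_E_prod rk_E_le_top le_trans by blast

abbreviation atom_cong :: "'a list \<Rightarrow> 'a list \<Rightarrow> bool" where
  "atom_cong \<equiv> cong_gen atoms_E rels_E"

lemma rels_E_commute: "a \<in> atoms_E \<Longrightarrow> b \<in> atoms_E \<Longrightarrow> rels_E [a, b] [b, (a::'a)]"
  unfolding rels_E_def by blast

lemma atom_cong_mset: "set u \<subseteq> atoms_E \<Longrightarrow> mset u = mset v \<Longrightarrow> atom_cong u (v::'a list)"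
  using cong_gen_mset[where A = atoms_E and R = rels_E, OF rels_E_commute] .

lemma rels_E_absorb:
  assumes "as \<noteq> []" "set as \<subseteq> atoms_E" "independent_E (set as)" "distinct as"
    and "b \<in> atoms_E" "le_E b (prod_list as)"
  shows "rels_E as (as @ [b::'a])"
proof -
  have "length as \<le> rk_E (top_E::'a)"
    using card_independent_E_le_rk_top[OF assms(3)] distinct_card[OF assms(4)] by simp
  then show ?thesis
    using assms unfolding rels_E_def by (auto simp: Suc_le_eq)
qed

lemma atom_cong_sound: "atom_cong u v \<Longrightarrow> prod_list u = prod_list (v::'a list)"
proof (induction rule: cong_gen.induct)
  case (base u v)
  then consider a b where "u = [a, b]" "v = [b, a]"
    | b where "le_E b (prod_list u)" "v = u @ [b]"
    unfolding rels_E_def by blast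
  then show ?case
    by cases (simp add: mult.commute, simp add: le_E_absorb)
qed auto

lemma atom_cong_append_below:
  assumes u: "set u \<subseteq> atoms_E" and v: "set v \<subseteq> atoms_E"
    and below: "le_E (prod_list v) (prod_list (u::'a list))"
  shows "atom_cong u (u @ v)"
proof (cases "u = []")
  case True
  then have "v = []"
    using below v prod_list_atoms_eq_one_iff le_E_one_iff by simp
  with True show ?thesis by (simp add: cong_gen.refl)
next
  case False
  obtain I where I: "I \<subseteq> set u" "independent_E I" "(\<Prod>t\<in>I. t) = (\<Prod>t\<in>set u. t)"
    using exists_independent_subset_prod_eq by blast
  obtain as where as: "set as = I" "distinct as"
    using finite_distinct_list[OF finite] by blast
  have as_u: "prod_list as = prod_list u"
    using I(3) as(1) by (simp add: prod_list_eq_prod_set)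
  have "as \<noteq> []"
  proof
    assume "as = []"
    then have "prod_list u = 1" using as_u by simp
    with False u show False using prod_list_atoms_eq_one_iff by blast
  qed
  have as_atoms: "set as \<subseteq> atoms_E"
    using I as u by blast
  have absorb: "atom_cong as (as @ w)"
    if "set w \<subseteq> atoms_E" "\<forall>c\<in>set w. le_E c (prod_list u)" for w
  proof (rule cong_gen_absorb[OF as_atoms _ that(1)])
    fix c assume "c \<in> set w"
    then show "rels_E as (as @ [c])"
      using rels_E_absorb[OF \<open>as \<noteq> []\<close> as_atoms] as I as_u that by auto
  qed
  have "mset as = mset_set I"
    using as mset_set_set by metis
  also have "\<dots> \<subseteq># mset_set (set_mset (mset u))"
    using I(1) by (simp add: subset_imp_msubset_mset_set)
  also have "\<dots> \<subseteq># mset u"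
    by (rule mset_set_set_mset_msubset)
  finally obtain rest where rest: "mset u = mset (as @ rest)"
    by (metis ex_mset mset_append mset_subset_eq_exists_conv)
  then have rest_u: "set rest \<subseteq> set u"
    by (metis Un_upper2 set_append set_mset_mset)
  have rest_atoms: "set rest \<subseteq> atoms_E"
    using rest_u u by blast
  have rest_below: "le_E c (prod_list u)" if "c \<in> set (rest @ v)" for c
    using that rest_u le_E_prod_list_member le_E_trans[OF le_E_prod_list_member below] by auto
  have "atom_cong u (as @ rest)"
    using atom_cong_mset u rest by blast
  moreover have "atom_cong (as @ rest) as"
    using absorb[of rest] rest_atoms rest_below by (simp add: cong_gen.sym)
  moreover have "atom_cong as (as @ rest @ v)"
    using absorb[of "rest @ v"] rest_atoms v rest_below by simp
  moreover have "atom_cong (as @ rest @ v) (u @ v)"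
    using atom_cong_mset[of "as @ rest @ v" "u @ v"] as_atoms rest_atoms v rest by simp
  ultimately show ?thesis
    by (blast intro: cong_gen.trans)
qed

lemma atom_cong_complete:
  assumes "set u \<subseteq> atoms_E" "set v \<subseteq> atoms_E" "prod_list u = prod_list (v::'a list)"
  shows "atom_cong u v"
proof -
  have "atom_cong u (u @ v)" "atom_cong v (v @ u)"
    using atom_cong_append_below assms le_E_refl by metis+
  moreover have "atom_cong (u @ v) (v @ u)"
    using atom_cong_mset assms by (simp add: union_commute)
  ultimately show ?thesis
    by (blast intro: cong_gen.trans cong_gen.sym)
qed

end

theorem proposition1:
  assumes idem: "\<forall>x::'a::{comm_monoid_mult,finite}. x * x = x"
    and graded: "graded_E TYPE('a)"
    and atomic: "atomic_E TYPE('a)"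
  shows "presents (atoms_E :: 'a set) rels_E UNIV"
proof -
  interpret graded_idem_comm_monoid "TYPE('a)"
    by unfold_locales (use idem graded in auto)
  have "\<exists>w. set w \<subseteq> atoms_E \<and> prod_list w = x" for x :: 'a
  proof -
    obtain S where "S \<subseteq> atoms_E" "x = (\<Prod>s\<in>S. s)"
      using atomic unfolding atomic_E_def by blast
    moreover obtain w where "set w = S"
      using finite_list[OF finite] by blast
    ultimately show ?thesis
      using prod_list_eq_prod_set by metis
  qed
  then show ?thesis
    unfolding presents_def using atom_cong_sound atom_cong_complete by blast
qed

end
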